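(* Let $n\ge 2$ and $1\le k\le n-1$. The automaton $\mathcal{CB}_{n,k}$ has a reset word of length at most $4n\lceil\log_2 n\rceil$.
   Context: A deterministic finite automaton (DFA) is a triple $\langle Q,\Sigma,\delta\rangle$ with $Q$ a finite set of states, $\Sigma$ a finite alphabet and $\delta\colon Q\times\Sigma\to Q$. Words act on states from left to right: $q\cdot(a_1a_2\cdots a_\ell)=(\cdots((q\cdot a_1)\cdot a_2)\cdots)\cdot a_\ell$, where $q\cdot a=\delta(q,a)$; for $P\subseteq Q$, $P\cdot w=\{p\cdot w\mid p\in P\}$. A word $w$ is a reset (synchronizing) word if $|Q\cdot w|=1$. The automaton $\mathcal{CB}_{n,k}$ has states $q_1,\dots,q_n$ and letters $a,b,c$: $a$ acts as the cyclic permutation $q_i\mapsto q_{i+1}$ for $i<n$ and $q_n\mapsto q_1$; $b$ maps $q_1$ to $q_2$ and fixes all other states; $c$ swaps $q_k$ and $q_{k+1}$ and fixes all other states. *)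

theory Defs
  imports Complex_Main
begin

datatype letter = A | B | C

definition CB_states :: "nat \<Rightarrow> nat set" where
  "CB_states n = {1..n}"

definition CB_delta :: "nat \<Rightarrow> nat \<Rightarrow> nat \<Rightarrow> letter \<Rightarrow> nat" where
  "CB_delta n k q x = (case x of
      A \<Rightarrow> (if q < n then q + 1 else 1)
    | B \<Rightarrow> (if q = 1 then 2 else q)
    | C \<Rightarrow> (if q = k then k + 1 else if q = k + 1 then k else q))"

definition CB_act :: "nat \<Rightarrow> nat \<Rightarrow> nat \<Rightarrow> letter list \<Rightarrow> nat" where
  "CB_act n k q w = foldl (CB_delta n k) q w"

definition CB_reset_word :: "nat \<Rightarrow> nat \<Rightarrow> letter list \<Rightarrow> bool" where
  "CB_reset_word n k w \<longleftrightarrow> card ((\<lambda>q. CB_act n k q w) ` CB_states n) = 1"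

end

theory Submission
  imports Defs "HOL-Combinatorics.Transposition"
begin

text \<open>
  Give the state q, after t letters a have been read, the label (k + 1 + t - q) mod n. In these
  moving coordinates a acts trivially, c read at time t swaps the labels t and t + 1, and b read
  at time t moves the label (k + t) mod n one step down. Let P be the set of occupied labels.
  One sweep over the times 0, ..., n - 1, inserting c where appropriate, carries every label of
  odd rank in P (except a last one) up to just below its successor in P; a second sweep,
  inserting b where appropriate, moves every label of even rank one step down onto it. The two
  sweeps have length at most 4n and shrink |P| to at most (|P| + 1) / 2, so ceil(log2 n) rounds
  leave a single state.
\<close>

lemma inj_on_mod_atLeastLessThan: "inj_on (\<lambda>x. x mod n) {a..<a + n :: nat}"
proof -
  have "x = y" if "x \<le> y" "x \<in> {a..<a + n}" "y \<in> {a..<a + n}" "x mod n = y mod n" for x y :: nat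
  proof -
    have "n dvd y - x" "y - x < n"
      using that by (auto simp: mod_eq_dvd_iff_nat[symmetric])
    then show ?thesis
      using that(1) by (metis diff_is_0_eq le_antisym nat_dvd_not_less neq0_conv)
  qed
  then show ?thesis
    by (intro inj_onI) (metis nat_le_linear)
qed

lemma image_add_mod_lessThan: "(\<lambda>t. (k + t) mod n) ` {..<n} = {..<n :: nat}"
proof (cases "n = 0")
  case False
  have "inj_on (\<lambda>t. (k + t) mod n) {..<n}"
    using comp_inj_on[of "\<lambda>t. k + t" "{..<n}", OF _ inj_on_subset[OF inj_on_mod_atLeastLessThan, of _ k n]]
    unfolding comp_def by fastforce
  with False show ?thesis
    by (intro endo_inj_surj) auto
qed simp

lemma mod_add_pred:
  fixes m n :: nat
  assumes "0 < m mod n"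
  shows "(m + n - 1) mod n = m mod n - 1"
proof -
  obtain m' where "m = Suc m'"
    using assms by (cases m) auto
  with assms show ?thesis
    by (auto simp: mod_Suc split: if_splits)
qed

section \<open>Moving labels\<close>

definition cb_label :: "nat \<Rightarrow> nat \<Rightarrow> nat \<Rightarrow> nat \<Rightarrow> nat" where
  "cb_label n k t q = (k + 1 + t + n - q) mod n"

text \<open>The first component is the time, i.e. the number of letters a read so far, modulo n.\<close>

fun label_step :: "nat \<Rightarrow> nat \<Rightarrow> nat \<times> nat \<Rightarrow> letter \<Rightarrow> nat \<times> nat" where
  "label_step n k (t, u) A = (Suc t mod n, u)"
| "label_step n k (t, u) B = (t, if u = (k + t) mod n then (k + t + n - 1) mod n else u)"
| "label_step n k (t, u) C = (t, transpose (t mod n) (Suc t mod n) u)"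

lemma cb_label_inj_on: "inj_on (cb_label n k t) {1..n}"
proof -
  have "inj_on (\<lambda>q. k + 1 + t + n - q) {1..n}"
    by (intro inj_onI) auto
  moreover have "(\<lambda>q. k + 1 + t + n - q) ` {1..n} \<subseteq> {k + 1 + t..<k + 1 + t + n}"
    by auto
  ultimately show ?thesis
    using comp_inj_on[OF _ inj_on_subset[OF inj_on_mod_atLeastLessThan]]
    unfolding cb_label_def comp_def by blast
qed

lemma CB_delta_in_states: "1 \<le> k \<Longrightarrow> k < n \<Longrightarrow> q \<in> {1..n} \<Longrightarrow> CB_delta n k q x \<in> {1..n}"
  by (cases x) (auto simp: CB_delta_def)

lemma CB_act_in_states:
  assumes "1 \<le> k" "k < n" "q \<in> {1..n}"
  shows "CB_act n k q w \<in> {1..n}"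
  using assms(3) unfolding CB_act_def
  by (induction w arbitrary: q) (use CB_delta_in_states[OF assms(1,2)] in auto)

lemma cb_label_CB_delta:
  assumes "1 \<le> k" "k < n" "q \<in> {1..n}"
  shows "label_step n k (t mod n, cb_label n k t q) x =
           ((t + count_list [x] A) mod n, cb_label n k (t + count_list [x] A) (CB_delta n k q x))"
proof (cases x)
  case A
  have "Suc (k + t + n) mod n = Suc (k + t) mod n"
    by (metis add_Suc mod_add_self2)
  with A show ?thesis
    using assms by (auto simp: cb_label_def CB_delta_def mod_Suc_eq)
next
  case B
  have "cb_label n k t 1 = (k + t) mod n" "cb_label n k t 2 = (k + t + n - 1) mod n"
    using assms by (auto simp: cb_label_def add.commute)
  moreover have "cb_label n k t q \<noteq> cb_label n k t 1" if "q \<noteq> 1"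
    using cb_label_inj_on[of n k t] assms that by (auto dest: inj_onD)
  moreover have "(k + t mod n + n - 1) mod n = (k + t + n - 1) mod n"
  proof -
    have "k + t mod n + n - 1 = (k + n - 1) + t mod n" "k + t + n - 1 = (k + n - 1) + t"
      using assms by auto
    then show ?thesis
      by (simp only: mod_add_right_eq)
  qed
  ultimately show ?thesis
    using B by (auto simp: CB_delta_def mod_add_right_eq)
next
  case C
  have "Suc (t + n) mod n = Suc t mod n"
    by (metis add_Suc mod_add_self2)
  then have labels: "cb_label n k t k = Suc t mod n" "cb_label n k t (Suc k) = t mod n"
    using assms by (auto simp: cb_label_def)
  moreover have "cb_label n k t q \<notin> {Suc t mod n, t mod n}" if "q \<notin> {k, Suc k}"
    using inj_onD[OF cb_label_inj_on, of n k t q k] inj_onD[OF cb_label_inj_on, of n k t q "Suc k"]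
      labels assms that by auto
  ultimately show ?thesis
    using C by (auto simp: CB_delta_def mod_Suc_eq)
qed

lemma cb_label_CB_act:
  assumes "1 \<le> k" "k < n" "q \<in> {1..n}"
  shows "foldl (label_step n k) (t mod n, cb_label n k t q) w =
           ((t + count_list w A) mod n, cb_label n k (t + count_list w A) (CB_act n k q w))"
  using assms(3)
proof (induction w arbitrary: q t)
  case Nil
  then show ?case by (simp add: CB_act_def)
next
  case (Cons x w)
  have "CB_delta n k q x \<in> {1..n}"
    using CB_delta_in_states assms Cons.prems by blast
  then show ?case
    using Cons.IH[of "CB_delta n k q x" "t + count_list [x] A"] cb_label_CB_delta[OF assms(1,2) Cons.prems]
    by (simp add: CB_act_def add.assoc)
qed

section \<open>Ranks and the collapsing map\<close>

definition rank :: "nat set \<Rightarrow> nat \<Rightarrow> nat" where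
  "rank P v = card {p \<in> P. p \<le> v}"

definition next_in :: "nat set \<Rightarrow> nat \<Rightarrow> nat" where
  "next_in P v = (LEAST p. p \<in> P \<and> v < p)"

lemma rank_le_card: "finite P \<Longrightarrow> rank P v \<le> card P"
  unfolding rank_def by (rule card_mono) auto

lemma rank_Suc: "finite P \<Longrightarrow> rank P (Suc v) = rank P v + (if Suc v \<in> P then 1 else 0)"
proof -
  assume "finite P"
  moreover have "{p \<in> P. p \<le> Suc v} = (if Suc v \<in> P then insert (Suc v) else id) {p \<in> P. p \<le> v}"
    by (auto simp: le_Suc_eq)
  ultimately show ?thesis
    by (simp add: rank_def)
qed

lemma rank_pos: "finite P \<Longrightarrow> v \<in> P \<Longrightarrow> 0 < rank P v"
  unfolding rank_def by (subst card_gt_0_iff) auto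

lemma rank_strict_mono_on: "finite P \<Longrightarrow> strict_mono_on P (rank P)"
  unfolding rank_def by (intro strict_mono_onI psubset_card_mono) (auto simp: set_eq_iff, metis leD order_refl)

lemma inj_on_rank: "finite P \<Longrightarrow> inj_on (rank P) P"
  by (rule strict_mono_on_imp_inj_on[OF rank_strict_mono_on])

lemma rank_less_card_iff: "finite P \<Longrightarrow> rank P v < card P \<longleftrightarrow> (\<exists>p \<in> P. v < p)"
proof -
  assume fin: "finite P"
  have "rank P v = card P \<longleftrightarrow> {p \<in> P. p \<le> v} = P"
    unfolding rank_def using fin card_subset_eq[of P "{p \<in> P. p \<le> v}"] by auto
  then show ?thesis
    using rank_le_card[OF fin, of v] by (force simp: not_le)
qed

lemma next_in_mem: "\<exists>p \<in> P. v < p \<Longrightarrow> next_in P v \<in> P"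
  unfolding next_in_def by (metis (mono_tags, lifting) LeastI)

lemma less_next_in: "\<exists>p \<in> P. v < p \<Longrightarrow> v < next_in P v"
  unfolding next_in_def by (metis (mono_tags, lifting) LeastI)

lemma next_in_le: "p \<in> P \<Longrightarrow> v < p \<Longrightarrow> next_in P v \<le> p"
  unfolding next_in_def by (simp add: Least_le)

lemma rank_below_next_in:
  assumes "\<exists>p \<in> P. v < p" "v \<le> t" "t < next_in P v"
  shows "rank P t = rank P v"
proof -
  have "{p \<in> P. p \<le> t} = {p \<in> P. p \<le> v}"
    using next_in_le[of _ P v] assms(2,3) by force
  then show ?thesis
    by (simp add: rank_def)
qed

lemma rank_next_in:
  assumes "finite P" "\<exists>p \<in> P. v < p"
  shows "rank P (next_in P v) = Suc (rank P v)"
proof -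
  have "rank P (next_in P v - 1) = rank P v"
    using less_next_in[OF assms(2)] by (intro rank_below_next_in[OF assms(2)]) auto
  then show ?thesis
    using rank_Suc[OF assms(1), of "next_in P v - 1"] next_in_mem[OF assms(2)] less_next_in[OF assms(2)] by simp
qed

definition swap_time :: "nat set \<Rightarrow> nat \<Rightarrow> bool" where
  "swap_time P t \<longleftrightarrow> odd (rank P t) \<and> Suc t \<notin> P \<and> (\<exists>p \<in> P. t < p)"

definition push :: "nat set \<Rightarrow> nat \<Rightarrow> nat" where
  "push P v = (if odd (rank P v) \<and> (\<exists>p \<in> P. v < p) then next_in P v - 1 else v)"

definition merge_point :: "nat set \<Rightarrow> nat \<Rightarrow> bool" where
  "merge_point P v \<longleftrightarrow> v \<in> P \<and> even (rank P v)"

definition pull :: "nat set \<Rightarrow> nat \<Rightarrow> nat" where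
  "pull P v = (if merge_point P v then v - 1 else v)"

definition collapse :: "nat set \<Rightarrow> nat \<Rightarrow> nat" where
  "collapse P v = pull P (push P v)"

lemma le_push: "v \<le> push P v"
  using less_next_in[of P v] by (cases "\<exists>p \<in> P. v < p") (auto simp: push_def)

lemma push_less: "P \<subseteq> {..<n} \<Longrightarrow> v \<in> P \<Longrightarrow> push P v < n"
  using next_in_mem[of P v] by (cases "\<exists>p \<in> P. v < p") (auto simp: push_def)

lemma swap_time_Suc_less: "P \<subseteq> {..<n} \<Longrightarrow> swap_time P t \<Longrightarrow> Suc t < n"
  unfolding swap_time_def by force

lemma swap_time_below_push:
  assumes "finite P" "v \<le> t" "t < push P v"
  shows "swap_time P t"
proof -
  have *: "odd (rank P v)" "\<exists>p \<in> P. v < p" and "Suc t < next_in P v"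
    using assms(2,3) by (auto simp: push_def split: if_splits)
  then have "rank P t = rank P v" "rank P (Suc t) = rank P v"
    using assms(2) by (auto intro!: rank_below_next_in)
  then show ?thesis
    using * \<open>Suc t < next_in P v\<close> rank_Suc[OF assms(1), of t] next_in_mem[OF *(2)]
    unfolding swap_time_def by (auto intro!: bexI[of _ "next_in P v"])
qed

lemma not_swap_time_push: "\<not> swap_time P (push P v)"
proof (cases "odd (rank P v) \<and> (\<exists>p \<in> P. v < p)")
  case True
  then have "Suc (push P v) = next_in P v"
    using less_next_in[of P v] by (simp add: push_def)
  then show ?thesis
    using next_in_mem[of P v] True by (simp add: swap_time_def)
next
  case False
  then show ?thesis
    by (auto simp: swap_time_def push_def)
qed

lemma merge_point_pos: "finite P \<Longrightarrow> merge_point P v \<Longrightarrow> 0 < v"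
proof (rule ccontr)
  assume "finite P" "merge_point P v" "\<not> 0 < v"
  then have "{p \<in> P. p \<le> v} = {0}" "even (rank P v)"
    by (auto simp: merge_point_def)
  then show False
    by (simp add: rank_def)
qed

lemma not_merge_point_pred: "finite P \<Longrightarrow> merge_point P v \<Longrightarrow> \<not> merge_point P (v - 1)"
  using merge_point_pos[of P v] rank_Suc[of P "v - 1"] by (auto simp: merge_point_def)

lemma collapse_next_in:
  assumes "finite P" "odd (rank P v)" "\<exists>p \<in> P. v < p"
  shows "collapse P v = collapse P (next_in P v)"
proof -
  define y where "y = next_in P v"
  have y: "y \<in> P" "v < y" "rank P y = Suc (rank P v)"
    using next_in_mem[OF assms(3)] less_next_in[OF assms(3)] rank_next_in[OF assms(1,3)] by (simp_all add: y_def)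
  have "rank P (y - 1) = rank P v"
    using y(2) by (intro rank_below_next_in[OF assms(3)]) (auto simp: y_def)
  then have "collapse P v = y - 1"
    using assms(2,3) by (simp add: collapse_def push_def pull_def merge_point_def y_def)
  moreover have "collapse P y = y - 1"
    using y assms(2) by (simp add: collapse_def push_def pull_def merge_point_def)
  ultimately show ?thesis
    by (simp add: y_def)
qed

lemma card_even_or_top_le: "card {j \<in> {1..m}. even j \<or> j = m} \<le> (m + 1) div 2"
proof -
  have "{j \<in> {1..m}. even j \<or> j = m} \<subseteq> (\<lambda>i. min (2 * i) m) ` {1..(m + 1) div 2}"
  proof
    fix j assume j: "j \<in> {j \<in> {1..m}. even j \<or> j = m}"
    then have "j = min (2 * (if even j then j div 2 else (m + 1) div 2)) m"
      by auto
    moreover have "(if even j then j div 2 else (m + 1) div 2) \<in> {1..(m + 1) div 2}"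
      using j by auto
    ultimately show "j \<in> (\<lambda>i. min (2 * i) m) ` {1..(m + 1) div 2}"
      by blast
  qed
  then have "card {j \<in> {1..m}. even j \<or> j = m} \<le> card ((\<lambda>i. min (2 * i) m) ` {1..(m + 1) div 2})"
    by (intro card_mono) auto
  also have "\<dots> \<le> (m + 1) div 2"
    using card_image_le[of "{1..(m + 1) div 2}" "\<lambda>i. min (2 * i) m"] by simp
  finally show ?thesis .
qed

lemma card_collapse_image: "finite P \<Longrightarrow> card (collapse P ` P) \<le> (card P + 1) div 2"
proof -
  assume fin: "finite P"
  define Z where "Z = {v \<in> P. even (rank P v) \<or> \<not> (\<exists>p \<in> P. v < p)}"
  have "collapse P v \<in> collapse P ` Z" if "v \<in> P" for v
  proof (cases "v \<in> Z")
    case False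
    then have *: "odd (rank P v)" "\<exists>p \<in> P. v < p"
      using that by (auto simp: Z_def)
    then have "next_in P v \<in> Z"
      using next_in_mem[OF *(2)] rank_next_in[OF fin *(2)] by (simp add: Z_def)
    then show ?thesis
      using collapse_next_in[OF fin *] by blast
  qed simp
  then have "card (collapse P ` P) \<le> card (collapse P ` Z)"
    using fin by (intro card_mono) (auto simp: Z_def)
  also have "\<dots> \<le> card Z"
    using fin by (intro card_image_le) (simp add: Z_def)
  also have "\<dots> = card (rank P ` Z)"
    using inj_on_subset[OF inj_on_rank[OF fin]] by (intro card_image[symmetric]) (auto simp: Z_def)
  also have "\<dots> \<le> card {j \<in> {1..card P}. even j \<or> j = card P}"
  proof (rule card_mono)
    show "rank P ` Z \<subseteq> {j \<in> {1..card P}. even j \<or> j = card P}"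
    proof
      fix j assume "j \<in> rank P ` Z"
      then obtain v where "v \<in> P" "j = rank P v" "even j \<or> \<not> (\<exists>p \<in> P. v < p)"
        by (auto simp: Z_def)
      then show "j \<in> {j \<in> {1..card P}. even j \<or> j = card P}"
        using rank_pos[OF fin] rank_le_card[OF fin, of v] rank_less_card_iff[OF fin, of v]
        by (auto simp: Suc_le_eq)
    qed
  qed simp
  also have "\<dots> \<le> (card P + 1) div 2"
    by (rule card_even_or_top_le)
  finally show ?thesis .
qed

section \<open>Sweeps\<close>

text \<open>After i letters of a swap sweep, the label that started at v sits at min (max i v) (push P v).\<close>

lemma push_track_idle:
  assumes "finite P" "\<not> swap_time P i"
  shows "min (max (Suc i) v) (push P v) = min (max i v) (push P v)"
  using swap_time_below_push[OF assms(1), of v i] assms(2) by (cases "v \<le> i"; cases "i < push P v") auto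

lemma push_track_swap:
  assumes "finite P" "v \<in> P" "swap_time P i"
  shows "transpose i (Suc i) (min (max i v) (push P v)) = min (max (Suc i) v) (push P v)"
proof (cases "v \<le> i")
  case True
  have "i \<noteq> push P v"
    using not_swap_time_push assms(3) by metis
  then show ?thesis
    using True le_push[of v P] by (cases "i < push P v") auto
next
  case False
  have "Suc i \<noteq> v"
    using assms(2,3) by (auto simp: swap_time_def)
  then show ?thesis
    using False le_push[of v P] by auto
qed

definition swap_sweep :: "nat \<Rightarrow> nat set \<Rightarrow> letter list" where
  "swap_sweep n P = concat (map (\<lambda>t. (if swap_time P t then [C] else []) @ [A]) [0..<n])"

lemma label_step_swap_sweep:
  assumes "P \<subseteq> {..<n}" "v \<in> P"
  shows "foldl (label_step n k) (0, v) (swap_sweep n P) = (0, push P v)"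
proof -
  have fin: "finite P"
    using assms(1) finite_subset by blast
  have "foldl (label_step n k) (0, v) (concat (map (\<lambda>t. (if swap_time P t then [C] else []) @ [A]) [0..<i]))
          = (i mod n, min (max i v) (push P v))" if "i \<le> n" for i
    using that
  proof (induction i)
    case (Suc i)
    then have "i mod n = i"
      by simp
    moreover have "Suc i mod n = Suc i" if "swap_time P i"
      using swap_time_Suc_less[OF assms(1) that] by simp
    ultimately show ?case
      using Suc push_track_idle[OF fin, of i v] push_track_swap[OF fin assms(2), of i] by auto
  qed (simp add: le_push)
  from this[of n] show ?thesis
    using push_less[OF assms] assms by (auto simp: swap_sweep_def)
qed

definition merge_sweep :: "nat \<Rightarrow> nat \<Rightarrow> nat set \<Rightarrow> letter list" where
  "merge_sweep n k P = concat (map (\<lambda>t. (if merge_point P ((k + t) mod n) then [B] else []) @ [A]) [0..<n])"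

lemma label_step_merge_sweep:
  assumes "finite P" "v < n"
  shows "foldl (label_step n k) (0, v) (merge_sweep n k P) = (0, pull P v)"
proof -
  have "foldl (label_step n k) (0, v) (concat (map (\<lambda>t. (if merge_point P ((k + t) mod n) then [B] else []) @ [A]) [0..<i]))
          = (i mod n, if merge_point P v \<and> v \<in> (\<lambda>t. (k + t) mod n) ` {..<i} then v - 1 else v)"
    if "i \<le> n" for i
    using that
  proof (induction i)
    case (Suc i)
    then have "i mod n = i"
      by simp
    moreover have "(k + i + n - 1) mod n = (k + i) mod n - 1" if "merge_point P ((k + i) mod n)"
      using mod_add_pred merge_point_pos[OF assms(1) that] by blast
    ultimately show ?case
      using Suc not_merge_point_pred[OF assms(1), of v] by (auto simp: lessThan_Suc)
  qed simp
  from this[of n] show ?thesis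
    using assms(2) by (simp add: merge_sweep_def image_add_mod_lessThan pull_def)
qed

fun sync_word :: "nat \<Rightarrow> nat \<Rightarrow> nat \<Rightarrow> nat set \<Rightarrow> letter list" where
  "sync_word n k 0 P = []"
| "sync_word n k (Suc j) P = swap_sweep n P @ merge_sweep n k P @ sync_word n k j (collapse P ` P)"

lemma collapse_image_subset: "P \<subseteq> {..<n} \<Longrightarrow> collapse P ` P \<subseteq> {..<n}"
  using push_less[of P n] by (fastforce simp: collapse_def pull_def)

lemma label_step_sync_word:
  assumes "P \<subseteq> {..<n}" "u \<in> P"
  shows "snd (foldl (label_step n k) (0, u) (sync_word n k j P)) \<in> ((\<lambda>P. collapse P ` P) ^^ j) P"
  using assms
proof (induction j arbitrary: P u)
  case (Suc j)
  have "finite P" "push P u < n"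
    using Suc.prems finite_subset push_less by auto
  then have "foldl (label_step n k) (0, u) (swap_sweep n P @ merge_sweep n k P) = (0, collapse P u)"
    using label_step_swap_sweep[OF Suc.prems] label_step_merge_sweep by (simp add: collapse_def)
  then show ?case
    using Suc.IH[OF collapse_image_subset[OF Suc.prems(1)]] Suc.prems(2)
    by (simp add: funpow_Suc_right del: funpow.simps)
qed simp

lemma card_funpow_collapse_image:
  "finite P \<Longrightarrow> card P \<le> 2 ^ j \<Longrightarrow> card (((\<lambda>P. collapse P ` P) ^^ j) P) \<le> 1"
proof (induction j arbitrary: P)
  case (Suc j)
  have "card (collapse P ` P) \<le> (2 ^ Suc j + 1) div 2"
    using card_collapse_image[OF Suc.prems(1)] Suc.prems(2) by (meson add_le_mono1 div_le_mono order_trans)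
  then show ?case
    using Suc.IH[of "collapse P ` P"] Suc.prems(1) by (simp add: funpow_Suc_right del: funpow.simps)
qed simp

lemma length_sync_word: "length (sync_word n k j P) \<le> 4 * n * j"
proof (induction j arbitrary: P)
  case (Suc j)
  have "length (concat (map (\<lambda>t. (if b t then [x] else []) @ [A]) [0..<m])) \<le> 2 * m" for b x m
    by (induction m) auto
  from this[of "swap_time P" C n] this[of "\<lambda>t. merge_point P ((k + t) mod n)" B n]
  have "length (swap_sweep n P) \<le> 2 * n" "length (merge_sweep n k P) \<le> 2 * n"
    unfolding swap_sweep_def merge_sweep_def .
  then show ?case
    using Suc.IH[of "collapse P ` P"] by simp
qed simp

lemma CB_reset_word_sync_word:
  assumes "1 \<le> k" "k < n" "n \<le> 2 ^ j"
  shows "CB_reset_word n k (sync_word n k j {..<n})"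
proof -
  define w where "w = sync_word n k j {..<n}"
  define S where "S = (\<lambda>q. CB_act n k q w) ` CB_states n"
  define Q where "Q = ((\<lambda>P. collapse P ` P) ^^ j) {..<n}"
  define T where "T = count_list w A"
  have "cb_label n k T ` S \<subseteq> Q"
  proof
    fix x assume "x \<in> cb_label n k T ` S"
    then obtain q where q: "q \<in> {1..n}" "x = cb_label n k T (CB_act n k q w)"
      by (auto simp: S_def CB_states_def)
    have "cb_label n k 0 q \<in> {..<n}"
      using assms by (simp add: cb_label_def)
    from label_step_sync_word[OF order_refl this, of k j] show "x \<in> Q"
      using cb_label_CB_act[OF assms(1,2) q(1), of 0 w] q(2) by (simp add: w_def T_def Q_def)
  qed
  moreover have "finite Q"
    unfolding Q_def by (induction j) auto
  moreover have "S \<subseteq> {1..n}"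
    using CB_act_in_states[OF assms(1,2)] by (auto simp: S_def CB_states_def)
  ultimately have "card S \<le> card Q"
    using card_image[OF inj_on_subset[OF cb_label_inj_on]] card_mono by metis
  also have "card Q \<le> 1"
    using card_funpow_collapse_image assms(3) by (simp add: Q_def)
  finally have "card S \<le> 1" .
  moreover have "S \<noteq> {}" "finite S"
    using assms by (auto simp: S_def CB_states_def)
  ultimately show ?thesis
    unfolding CB_reset_word_def w_def[symmetric] S_def[symmetric] by (simp add: le_antisym Suc_leI card_gt_0_iff)
qed

lemma le_two_pow_nat_ceiling_log: "0 < n \<Longrightarrow> n \<le> 2 ^ nat \<lceil>log 2 (real n)\<rceil>"
proof -
  assume "0 < n"
  then have "real n = 2 powr log 2 (real n)"
    by simp
  also have "\<dots> \<le> 2 powr real (nat \<lceil>log 2 (real n)\<rceil>)"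
    by (intro powr_mono) linarith+
  also have "\<dots> = real (2 ^ nat \<lceil>log 2 (real n)\<rceil>)"
    by (simp add: powr_realpow)
  finally show ?thesis
    by linarith
qed

theorem theorem1:
  fixes n k :: nat
  assumes "n \<ge> 2" and "1 \<le> k" and "k \<le> n - 1"
  shows "\<exists>w. CB_reset_word n k w \<and>
           real (length w) \<le> 4 * real n * real_of_int \<lceil>log 2 (real n)\<rceil>"
proof -
  define L where "L = nat \<lceil>log 2 (real n)\<rceil>"
  have "k < n" "n \<le> 2 ^ L"
    using assms le_two_pow_nat_ceiling_log[of n] by (auto simp: L_def)
  then have "CB_reset_word n k (sync_word n k L {..<n})"
    using CB_reset_word_sync_word assms(2) by blast
  moreover have "real (length (sync_word n k L {..<n})) \<le> 4 * real n * real L"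
    using length_sync_word[of n k L "{..<n}"] by (metis of_nat_le_iff of_nat_mult of_nat_numeral)
  moreover have "real L = real_of_int \<lceil>log 2 (real n)\<rceil>"
    using assms(1) by (simp add: L_def)
  ultimately show ?thesis
    by auto
qed

end
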